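(* Let $\mathcal{R}$ be a commutative ring with unity and let $P$ be a locally finite poset with at least three elements in which every maximal chain is infinite. Then for every additive biderivation $b$ of $I(P,\mathcal{R})$ there exist scalars $\lambda^i_j\in\mathcal{R}$ ($i\in\mathcal{I}$, $j\in\mathcal{J}_i$) such that for all $\alpha,\beta\in I(P,\mathcal{R})$, $$b(\alpha,\beta)=\sum_{i\in\mathcal{I}}\sum_{j\in\mathcal{J}_i}\lambda^i_j[\alpha^i_j,\beta^i_j],$$ where $\alpha^i_j=\sum_{x\le y,\ x,y\in P^i_j}\alpha_{xy}e_{xy}$ and similarly for $\beta$; i.e. $b$ is a sum of (restricted) inner biderivations.
   Context: $I(P,\mathcal{R})$ is the incidence algebra: functions $f:P\times P\to\mathcal{R}$ with $f(x,y)=0$ unless $x\le y$, with product $(fg)(x,y)=\sum_{x\le z\le y}f(x,z)g(z,y)$; $f_{xy}=f(x,y)$, $e_{xy}$ ($x\le y$) is the function equal to $1$ at $(x,y)$ and $0$ elsewhere, and sums are entrywise. $[\alpha,\beta]=\alpha\beta-\beta\alpha$. An additive biderivation is a map $b$ of two arguments, additive in each, with $b(\alpha\beta,\gamma)=\alpha b(\beta,\gamma)+b(\alpha,\gamma)\beta$ and $b(\alpha,\beta\gamma)=\beta b(\alpha,\gamma)+b(\alpha,\beta)\gamma$. The connected components $P^i$ ($i\in\mathcal{I}$) are the classes of the equivalence relation "joined by a finite sequence of successively comparable elements". A maximal chain is a totally ordered subset to which no element can be added keeping it totally ordered. For $Q=P^i$, let $L$ be its set of maximal chains; write $l'\approx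 l''$ if there exist $x<y$ with $x,y\in l'\cap l''$; call $l',l''$ connected if $l'\approx l_0\approx\cdots\approx l_n\approx l''$ for some maximal chains $l_0,\dots,l_n$; let $\{L_j\}_{j\in\mathcal{J}_i}$ be the equivalence classes and $P^i_j=\{x\in P^i: x\in l\text{ for some }l\in L_j\}$. *)

theory Defs
  imports Main
begin

text \<open>The poset P is the ambient type 'a (class order); elements of the incidence
algebra I(P,R) are functions f :: 'a => 'a => 'r vanishing off x <= y.\<close>

definition locally_finite :: "'a::order itself \<Rightarrow> bool" where
  "locally_finite _ \<longleftrightarrow> (\<forall>x y::'a. finite {x..y})"

definition incidence :: "('a::order \<Rightarrow> 'a \<Rightarrow> 'r::comm_ring_1) set" where
  "incidence = {f. \<forall>x y. \<not> x \<le> y \<longrightarrow> f x y = 0}"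

definition inc_add :: "('a \<Rightarrow> 'a \<Rightarrow> 'r::comm_ring_1) \<Rightarrow> ('a \<Rightarrow> 'a \<Rightarrow> 'r) \<Rightarrow> ('a \<Rightarrow> 'a \<Rightarrow> 'r)" where
  "inc_add f g = (\<lambda>x y. f x y + g x y)"

definition inc_mult :: "('a::order \<Rightarrow> 'a \<Rightarrow> 'r::comm_ring_1) \<Rightarrow> ('a \<Rightarrow> 'a \<Rightarrow> 'r) \<Rightarrow> ('a \<Rightarrow> 'a \<Rightarrow> 'r)" where
  "inc_mult f g = (\<lambda>x y. \<Sum>z\<in>{x..y}. f x z * g z y)"

definition inc_comm :: "('a::order \<Rightarrow> 'a \<Rightarrow> 'r::comm_ring_1) \<Rightarrow> ('a \<Rightarrow> 'a \<Rightarrow> 'r) \<Rightarrow> ('a \<Rightarrow> 'a \<Rightarrow> 'r)" where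
  "inc_comm f g = (\<lambda>x y. inc_mult f g x y - inc_mult g f x y)"

definition additive_biderivation ::
  "(('a::order \<Rightarrow> 'a \<Rightarrow> 'r::comm_ring_1) \<Rightarrow> ('a \<Rightarrow> 'a \<Rightarrow> 'r) \<Rightarrow> ('a \<Rightarrow> 'a \<Rightarrow> 'r)) \<Rightarrow> bool" where
  "additive_biderivation b \<longleftrightarrow>
     (\<forall>\<alpha>\<in>incidence. \<forall>\<beta>\<in>incidence. b \<alpha> \<beta> \<in> incidence) \<and>
     (\<forall>\<alpha>\<in>incidence. \<forall>\<alpha>'\<in>incidence. \<forall>\<beta>\<in>incidence.
        b (inc_add \<alpha> \<alpha>') \<beta> = inc_add (b \<alpha> \<beta>) (b \<alpha>' \<beta>)) \<and>
     (\<forall>\<alpha>\<in>incidence. \<forall>\<beta>\<in>incidence. \<forall>\<beta>'\<in>incidence.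
        b \<alpha> (inc_add \<beta> \<beta>') = inc_add (b \<alpha> \<beta>) (b \<alpha> \<beta>')) \<and>
     (\<forall>\<alpha>\<in>incidence. \<forall>\<beta>\<in>incidence. \<forall>\<gamma>\<in>incidence.
        b (inc_mult \<alpha> \<beta>) \<gamma> = inc_add (inc_mult \<alpha> (b \<beta> \<gamma>)) (inc_mult (b \<alpha> \<gamma>) \<beta>)) \<and>
     (\<forall>\<alpha>\<in>incidence. \<forall>\<beta>\<in>incidence. \<forall>\<gamma>\<in>incidence.
        b \<alpha> (inc_mult \<beta> \<gamma>) = inc_add (inc_mult \<beta> (b \<alpha> \<gamma>)) (inc_mult (b \<alpha> \<beta>) \<gamma>))"

definition is_chain :: "'a::order set \<Rightarrow> bool" where
  "is_chain S \<longleftrightarrow> (\<forall>x\<in>S. \<forall>y\<in>S. x \<le> y \<or> y \<le> x)"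

definition maximal_chain :: "'a::order set \<Rightarrow> bool" where
  "maximal_chain S \<longleftrightarrow> is_chain S \<and> (\<forall>z. z \<notin> S \<longrightarrow> \<not> is_chain (insert z S))"

definition chain_approx :: "'a::order set \<Rightarrow> 'a set \<Rightarrow> bool" where
  "chain_approx l1 l2 \<longleftrightarrow> maximal_chain l1 \<and> maximal_chain l2 \<and>
     (\<exists>x y. x < y \<and> x \<in> l1 \<and> x \<in> l2 \<and> y \<in> l1 \<and> y \<in> l2)"

definition chain_connected :: "'a::order set \<Rightarrow> 'a set \<Rightarrow> bool" where
  "chain_connected l1 l2 \<longleftrightarrow> (\<exists>l0. chain_approx l1 l0 \<and> chain_approx\<^sup>+\<^sup>+ l0 l2)"

text \<open>The equivalence classes L^i_j of maximal chains (over all components i at once: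
  maximal chains of distinct components are never related).\<close>
definition chain_classes :: "'a::order set set set" where
  "chain_classes = {C. \<exists>l. maximal_chain l \<and> C = {l'. maximal_chain l' \<and> chain_connected l l'}}"

definition class_support :: "'a::order set set \<Rightarrow> 'a set" where
  "class_support C = \<Union>C"

definition restrict_inc :: "'a::order set \<Rightarrow> ('a \<Rightarrow> 'a \<Rightarrow> 'r::comm_ring_1) \<Rightarrow> ('a \<Rightarrow> 'a \<Rightarrow> 'r)" where
  "restrict_inc S f = (\<lambda>x y. if x \<in> S \<and> y \<in> S then f x y else 0)"

end

theory Submission
  imports Defs "HOL-Library.Function_Algebras"
begin

text \<open>For every biderivation of a ring one has \<open>b(x,y) z [u,v] = [x,y] z b(u,v)\<close>. Evaluating this
  identity on matrix units shows that \<open>b(\<alpha>,\<beta>)\<close> agrees entrywise with \<open>[\<alpha>,\<beta>]\<close> up to a scalar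
  \<open>\<mu>(x,y) = b(e\<^sub>x\<^sub>x, e\<^sub>x\<^sub>y)\<^sub>x\<^sub>y\<close>, provided the pair \<open>x < y\<close> can be prolonged by some \<open>w < x\<close> or \<open>y < w\<close>;
  since maximal chains are infinite and intervals finite, this is always possible. The same
  identities give \<open>\<mu>(x,y) = \<mu>(y,z)\<close> for \<open>x < y < z\<close>, hence \<open>\<mu>\<close> is constant on the pairs of a
  maximal chain, and then on the pairs of all chains of a connectivity class. Finally a pair
  \<open>x < y\<close> lies in the support of exactly one class, and the whole interval \<open>[x,y]\<close> lies in it,
  so \<open>[\<alpha>,\<beta>]\<^sub>x\<^sub>y\<close> equals the corresponding entry of the restricted commutator of that class.\<close>

section \<open>The incidence algebra\<close>

definition inc_unit :: "'a::order \<Rightarrow> 'a \<Rightarrow> 'a \<Rightarrow> 'a \<Rightarrow> 'r::comm_ring_1" where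
  "inc_unit p q = (\<lambda>s t. if s = p \<and> t = q then 1 else 0)"

lemma inc_unit_incidence [simp]: "p \<le> q \<Longrightarrow> inc_unit p q \<in> incidence"
  by (auto simp: inc_unit_def incidence_def)

lemma inc_mult_incidence [simp]: "inc_mult f g \<in> incidence"
  by (auto simp: inc_mult_def incidence_def)

lemma inc_comm_incidence [simp]: "inc_comm f g \<in> incidence"
  by (auto simp: inc_comm_def inc_mult_def incidence_def)

lemma inc_add_eq_plus: "inc_add f g = f + g"
  by (auto simp: inc_add_def plus_fun_def)

lemma inc_comm_eq_diff: "inc_comm f g = inc_mult f g - inc_mult g f"
  by (auto simp: inc_comm_def fun_eq_iff)

lemma inc_comm_diag [simp]: "inc_comm f g x x = 0"
  by (simp add: inc_comm_def inc_mult_def mult.commute)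

lemma inc_comm_not_le: "\<not> x \<le> y \<Longrightarrow> inc_comm f g x y = 0"
  by (simp add: inc_comm_def inc_mult_def)

lemma inc_comm_not_less: "\<not> x < y \<Longrightarrow> inc_comm f g x y = 0"
  by (cases "x = y") (simp_all add: inc_comm_not_le)

lemma inc_mult_add_right: "inc_mult f (g + h) = inc_mult f g + inc_mult f h"
  by (auto simp: inc_mult_def fun_eq_iff distrib_left sum.distrib)

lemma inc_mult_add_left: "inc_mult (f + g) h = inc_mult f h + inc_mult g h"
  by (auto simp: inc_mult_def fun_eq_iff distrib_right sum.distrib)

lemma inc_mult_diff_right: "inc_mult f (g - h) = inc_mult f g - inc_mult f h"
  by (auto simp: inc_mult_def fun_eq_iff right_diff_distrib sum_subtractf)

lemma inc_mult_diff_left: "inc_mult (f - g) h = inc_mult f h - inc_mult g h"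
  by (auto simp: inc_mult_def fun_eq_iff left_diff_distrib sum_subtractf)

lemma inc_mult_assoc:
  fixes f g h :: "'a::order \<Rightarrow> 'a \<Rightarrow> 'r::comm_ring_1"
  assumes "locally_finite TYPE('a)"
  shows "inc_mult (inc_mult f g) h = inc_mult f (inc_mult g h)"
proof (intro ext)
  fix x y :: 'a
  have "inc_mult (inc_mult f g) h x y
      = (\<Sum>z\<in>{x..y}. \<Sum>w\<in>{w. w \<in> {x..y} \<and> w \<le> z}. f x w * g w z * h z y)"
    unfolding inc_mult_def
    by (rule sum.cong[OF refl]) (auto simp: sum_distrib_right intro!: sum.cong)
  also have "\<dots> = (\<Sum>w\<in>{x..y}. \<Sum>z\<in>{z. z \<in> {x..y} \<and> w \<le> z}. f x w * g w z * h z y)"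
    using assms by (subst sum.swap_restrict) (auto simp: locally_finite_def)
  also have "\<dots> = inc_mult f (inc_mult g h) x y"
    unfolding inc_mult_def
    by (rule sum.cong[OF refl]) (auto simp: sum_distrib_left mult.assoc intro!: sum.cong)
  finally show "inc_mult (inc_mult f g) h x y = inc_mult f (inc_mult g h) x y" .
qed

lemma inc_mult_unit_left:
  assumes "locally_finite TYPE('a)"
  shows "inc_mult (inc_unit p q) (f :: 'a::order \<Rightarrow> 'a \<Rightarrow> 'r::comm_ring_1)
       = (\<lambda>s t. if s = p then (if p \<le> q \<and> q \<le> t then f q t else 0) else 0)"
proof (intro ext)
  fix s t :: 'a
  have "finite {p..t}"
    using assms by (simp add: locally_finite_def)
  then show "inc_mult (inc_unit p q) f s t
      = (if s = p then (if p \<le> q \<and> q \<le> t then f q t else 0) else 0)"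
    by (auto simp: inc_mult_def inc_unit_def if_distrib[where f = "\<lambda>c. c * _"] cong: if_cong)
qed

lemma inc_mult_row_right:
  fixes f :: "'a::order \<Rightarrow> 'a \<Rightarrow> 'r::comm_ring_1"
  assumes "locally_finite TYPE('a)"
  shows "inc_mult f (\<lambda>s t. if s = p then g t else 0) s t = (if s \<le> p \<and> p \<le> t then f s p * g t else 0)"
proof -
  have "finite {s..t}"
    using assms by (simp add: locally_finite_def)
  then show ?thesis
    by (auto simp: inc_mult_def if_distrib sum.delta cong: if_cong)
qed

lemma inc_comm_units:
  assumes "locally_finite TYPE('a)" and "x < (y::'a::order)"
  shows "inc_comm (inc_unit x x) (inc_unit x y) = (inc_unit x y :: _ \<Rightarrow> _ \<Rightarrow> 'r::comm_ring_1)"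
  using assms by (auto simp: inc_comm_def fun_eq_iff inc_mult_unit_left) (auto simp: inc_unit_def)

lemma inc_comm_restrict_outside:
  "x \<notin> S \<or> y \<notin> S \<Longrightarrow> inc_comm (restrict_inc S f) (restrict_inc S g) x y = 0"
  by (auto simp: inc_comm_def inc_mult_def restrict_inc_def)

lemma inc_comm_restrict_interval:
  assumes "{x..y} \<subseteq> S"
  shows "inc_comm (restrict_inc S f) (restrict_inc S g) x y = inc_comm f g x y"
proof (cases "x \<le> y")
  case True
  then show ?thesis
    using assms unfolding inc_comm_def inc_mult_def restrict_inc_def
    by (intro arg_cong2[where f = "(-)"] sum.cong) auto
qed (simp add: inc_comm_not_le)

lemma sum_nonzero_subset_singleton:
  assumes "{c \<in> S. t c \<noteq> 0} \<subseteq> {c0}" and "c0 \<in> S"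
  shows "finite {c \<in> S. t c \<noteq> 0} \<and> sum t {c \<in> S. t c \<noteq> 0} = t c0"
proof (cases "t c0 = 0")
  case True
  with assms(1) have "{c \<in> S. t c \<noteq> 0} = {}"
    by blast
  with True show ?thesis
    by (metis finite.emptyI sum.empty)
next
  case False
  with assms have "{c \<in> S. t c \<noteq> 0} = {c0}"
    by blast
  then show ?thesis
    by simp
qed

section \<open>Maximal chains and their connectivity classes\<close>

lemma maximal_chain_extending:
  assumes "is_chain (S::'a::order set)"
  shows "\<exists>M. maximal_chain M \<and> S \<subseteq> M"
proof -
  let ?A = "{T. is_chain T \<and> S \<subseteq> T}"
  have "\<exists>M\<in>?A. \<forall>T\<in>?A. M \<subseteq> T \<longrightarrow> T = M"
  proof (rule subset_Zorn_nonempty)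
    show "?A \<noteq> {}"
      using assms by blast
    fix \<C> assume "\<C> \<noteq> {}" and \<C>: "subset.chain ?A \<C>"
    have "is_chain (\<Union>\<C>)"
      unfolding is_chain_def
    proof (intro ballI)
      fix x y assume "x \<in> \<Union>\<C>" "y \<in> \<Union>\<C>"
      then obtain X Y where XY: "X \<in> \<C>" "Y \<in> \<C>" "x \<in> X" "y \<in> Y"
        by blast
      then have "X \<subseteq> Y \<or> Y \<subseteq> X" and "is_chain X" "is_chain Y"
        using \<C> unfolding subset_chain_def by auto
      then show "x \<le> y \<or> y \<le> x"
        using XY unfolding is_chain_def by blast
    qed
    moreover have "S \<subseteq> \<Union>\<C>"
      using \<open>\<C> \<noteq> {}\<close> \<C> unfolding subset_chain_def by blast
    ultimately show "\<Union>\<C> \<in> ?A"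
      by blast
  qed
  then obtain M where M: "M \<in> ?A" and maximal: "\<forall>T\<in>?A. M \<subseteq> T \<longrightarrow> T = M"
    by blast
  have "\<not> is_chain (insert z M)" if "z \<notin> M" for z
    using maximal M that by blast
  with M have "maximal_chain M"
    unfolding maximal_chain_def by blast
  with M show ?thesis
    by blast
qed

lemma exists_below_or_above:
  assumes "locally_finite TYPE('a::order)"
    and "\<forall>l::'a set. maximal_chain l \<longrightarrow> infinite l"
    and "(u::'a) \<le> v"
  shows "\<exists>w. w < u \<or> v < w"
proof (rule ccontr)
  assume bounded: "\<not> ?thesis"
  have "is_chain {u, v}"
    using assms(3) by (auto simp: is_chain_def)
  then obtain M where M: "maximal_chain M" "{u, v} \<subseteq> M"
    using maximal_chain_extending by blast
  have "M \<subseteq> {u..v}"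
  proof
    fix m assume "m \<in> M"
    then have "(m \<le> u \<or> u \<le> m) \<and> (m \<le> v \<or> v \<le> m)"
      using M by (auto simp: maximal_chain_def is_chain_def)
    then show "m \<in> {u..v}"
      using bounded by (auto simp: order.order_iff_strict)
  qed
  then have "finite M"
    using assms(1) unfolding locally_finite_def by (blast intro: finite_subset)
  then show False
    using M assms(2) by blast
qed

lemma maximal_chain_has_less:
  assumes "maximal_chain A" and "x \<in> A" and "(w::'a::order) < x"
  shows "\<exists>a\<in>A. a < x"
proof (rule ccontr)
  assume none: "\<not> ?thesis"
  then have "\<forall>a\<in>A. x \<le> a"
    using assms(1,2) by (auto simp: maximal_chain_def is_chain_def order.order_iff_strict)
  then have "is_chain (insert w A)"
    using assms by (auto simp: maximal_chain_def is_chain_def intro: order.strict_implies_order order.trans)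
  moreover have "w \<notin> A"
    using none assms(3) by blast
  ultimately show False
    using assms(1) by (auto simp: maximal_chain_def)
qed

lemma maximal_chain_has_greater:
  assumes "maximal_chain A" and "y \<in> A" and "y < (w::'a::order)"
  shows "\<exists>a\<in>A. y < a"
proof (rule ccontr)
  assume none: "\<not> ?thesis"
  then have "\<forall>a\<in>A. a \<le> y"
    using assms(1,2) by (auto simp: maximal_chain_def is_chain_def order.order_iff_strict)
  then have "is_chain (insert w A)"
    using assms by (auto simp: maximal_chain_def is_chain_def intro: order.strict_implies_order order.trans)
  moreover have "w \<notin> A"
    using none assms(3) by blast
  ultimately show False
    using assms(1) by (auto simp: maximal_chain_def)
qed

lemma symp_chain_approx: "symp chain_approx"
  unfolding chain_approx_def by (rule sympI) blast

lemma chain_approx_refl: "chain_approx l1 l2 \<Longrightarrow> chain_approx l2 l2"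
  unfolding chain_approx_def by blast

lemma chain_approx_pair:
  "maximal_chain l1 \<Longrightarrow> maximal_chain l2 \<Longrightarrow> x < y \<Longrightarrow> {x, y} \<subseteq> l1 \<inter> l2 \<Longrightarrow> chain_approx l1 l2"
  unfolding chain_approx_def by blast

lemma tranclp_chain_approx_sym: "chain_approx\<^sup>+\<^sup>+ l1 l2 \<Longrightarrow> chain_approx\<^sup>+\<^sup>+ l2 l1"
  using sym_trancl[to_pred, OF symp_chain_approx] by (rule sympD)

lemma chain_connected_iff_tranclp: "chain_connected l1 l2 \<longleftrightarrow> chain_approx\<^sup>+\<^sup>+ l1 l2"
proof
  assume "chain_connected l1 l2"
  then show "chain_approx\<^sup>+\<^sup>+ l1 l2"
    unfolding chain_connected_def by (meson tranclp.r_into_trancl tranclp_trans)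
next
  assume "chain_approx\<^sup>+\<^sup>+ l1 l2"
  then show "chain_connected l1 l2"
  proof (rule converse_tranclpE)
    assume "chain_approx l1 l2"
    then show ?thesis
      unfolding chain_connected_def by (blast intro: chain_approx_refl)
  next
    fix l0 assume "chain_approx l1 l0" "chain_approx\<^sup>+\<^sup>+ l0 l2"
    then show ?thesis
      unfolding chain_connected_def by blast
  qed
qed

definition chain_class :: "'a::order set \<Rightarrow> 'a set set" where
  "chain_class l = {l'. maximal_chain l' \<and> chain_connected l l'}"

lemma chain_class_in_chain_classes: "maximal_chain l \<Longrightarrow> chain_class l \<in> chain_classes"
  unfolding chain_classes_def chain_class_def by blast

lemma chain_classes_connected:
  "C \<in> chain_classes \<Longrightarrow> l1 \<in> C \<Longrightarrow> l2 \<in> C \<Longrightarrow> chain_approx\<^sup>+\<^sup>+ l1 l2"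
  unfolding chain_classes_def chain_connected_iff_tranclp
  by (fastforce intro: tranclp_trans dest: tranclp_chain_approx_sym)

lemma interval_subset_class_support:
  assumes "maximal_chain L" and "{x, y} \<subseteq> L" and "x < y"
  shows "{x..y} \<subseteq> class_support (chain_class L)"
proof
  fix z assume "z \<in> {x..y}"
  then have "is_chain {x, z, y}"
    by (auto simp: is_chain_def intro: order.trans)
  then obtain M where "maximal_chain M" and "{x, z, y} \<subseteq> M"
    using maximal_chain_extending by blast
  with assms have "chain_approx L M"
    using chain_approx_pair[of L M x y] by auto
  with \<open>maximal_chain M\<close> have "M \<in> chain_class L"
    unfolding chain_class_def chain_connected_iff_tranclp by blast
  with \<open>{x, z, y} \<subseteq> M\<close> show "z \<in> class_support (chain_class L)"
    unfolding class_support_def by blast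
qed

text \<open>Two chains of a class through \<open>x\<close> and through \<open>y\<close> need not share a pair; the extra
  point \<open>w\<close> yields a chain \<open>{a, x, y}\<close> (or \<open>{x, y, c}\<close>) linking both to \<open>L\<close>.\<close>
lemma chain_class_unique:
  fixes x y :: "'a::order"
  assumes extend: "\<And>u v::'a. u \<le> v \<Longrightarrow> \<exists>w. w < u \<or> v < w"
    and C: "C \<in> chain_classes" "x \<in> class_support C" "y \<in> class_support C"
    and L: "maximal_chain L" "{x, y} \<subseteq> L" and "x < y"
  shows "C = chain_class L"
proof -
  obtain A B where AB: "A \<in> C" "x \<in> A" "B \<in> C" "y \<in> B"
    using C unfolding class_support_def by blast
  obtain l where l: "maximal_chain l" "C = chain_class l"
    using C(1) unfolding chain_classes_def chain_class_def by blast
  have max: "maximal_chain A" "maximal_chain B"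
    using AB l unfolding chain_class_def by auto
  have "chain_approx\<^sup>+\<^sup>+ A L \<or> chain_approx\<^sup>+\<^sup>+ B L"
  proof -
    obtain w where "w < x \<or> y < w"
      using extend[OF less_imp_le[OF \<open>x < y\<close>]] by blast
    then show ?thesis
    proof
      assume "w < x"
      then obtain a where a: "a \<in> A" "a < x"
        using maximal_chain_has_less max AB by blast
      have "is_chain {a, x, y}"
        using a \<open>x < y\<close> by (auto simp: is_chain_def intro: order.strict_implies_order order.strict_trans)
      then obtain M where M: "maximal_chain M" "{a, x, y} \<subseteq> M"
        using maximal_chain_extending by blast
      have "chain_approx A M"
        using chain_approx_pair[of A M a x] max M a AB by auto
      moreover have "chain_approx M L"
        using chain_approx_pair[of M L x y] M L \<open>x < y\<close> by auto
      ultimately show ?thesis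
        by (meson tranclp.r_into_trancl tranclp_trans)
    next
      assume "y < w"
      then obtain c where c: "c \<in> B" "y < c"
        using maximal_chain_has_greater max AB by blast
      have "is_chain {x, y, c}"
        using c \<open>x < y\<close> by (auto simp: is_chain_def intro: order.strict_implies_order order.strict_trans)
      then obtain M where M: "maximal_chain M" "{x, y, c} \<subseteq> M"
        using maximal_chain_extending by blast
      have "chain_approx B M"
        using chain_approx_pair[of B M y c] max M c AB by auto
      moreover have "chain_approx M L"
        using chain_approx_pair[of M L x y] M L \<open>x < y\<close> by auto
      ultimately show ?thesis
        by (meson tranclp.r_into_trancl tranclp_trans)
    qed
  qed
  moreover have "chain_approx\<^sup>+\<^sup>+ l A" "chain_approx\<^sup>+\<^sup>+ l B"
    using AB l unfolding chain_class_def chain_connected_iff_tranclp by auto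
  ultimately have "chain_approx\<^sup>+\<^sup>+ l L"
    by (blast intro: tranclp_trans)
  then have "chain_approx\<^sup>+\<^sup>+ L l"
    by (rule tranclp_chain_approx_sym)
  have "chain_approx\<^sup>+\<^sup>+ l l' \<longleftrightarrow> chain_approx\<^sup>+\<^sup>+ L l'" for l'
    using \<open>chain_approx\<^sup>+\<^sup>+ l L\<close> \<open>chain_approx\<^sup>+\<^sup>+ L l\<close> by (blast intro: tranclp_trans)
  then show ?thesis
    unfolding l(2) chain_class_def chain_connected_iff_tranclp by blast
qed

section \<open>Biderivations of an incidence algebra\<close>

locale incidence_biderivation =
  fixes b :: "('a::order \<Rightarrow> 'a \<Rightarrow> 'r::comm_ring_1) \<Rightarrow> ('a \<Rightarrow> 'a \<Rightarrow> 'r) \<Rightarrow> ('a \<Rightarrow> 'a \<Rightarrow> 'r)"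
  assumes locally_finite: "locally_finite TYPE('a)"
    and biderivation: "additive_biderivation b"
begin

lemma b_incidence [simp]: "f \<in> incidence \<Longrightarrow> g \<in> incidence \<Longrightarrow> b f g \<in> incidence"
  using biderivation by (auto simp: additive_biderivation_def)

lemma b_mult_left:
  "f \<in> incidence \<Longrightarrow> g \<in> incidence \<Longrightarrow> h \<in> incidence \<Longrightarrow>
    b (inc_mult f g) h = inc_mult f (b g h) + inc_mult (b f h) g"
  using biderivation by (auto simp: additive_biderivation_def inc_add_eq_plus)

lemma b_mult_right:
  "f \<in> incidence \<Longrightarrow> g \<in> incidence \<Longrightarrow> h \<in> incidence \<Longrightarrow>
    b f (inc_mult g h) = inc_mult g (b f h) + inc_mult (b f g) h"
  using biderivation by (auto simp: additive_biderivation_def inc_add_eq_plus)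

lemma b_mult_inc_comm:
  assumes "x \<in> incidence" "y \<in> incidence" "u \<in> incidence" "v \<in> incidence"
  shows "inc_mult (b x y) (inc_comm u v) = inc_mult (inc_comm x y) (b u v)"
proof -
  note expand = b_mult_left b_mult_right inc_mult_incidence inc_mult_add_right inc_mult_add_left
    inc_mult_assoc[OF locally_finite]
  \<comment> \<open>expand \<open>b(xu, yv)\<close> starting with the first, resp. the second argument\<close>
  have first: "b (inc_mult x u) (inc_mult y v)
      = inc_mult x (inc_mult y (b u v)) + inc_mult x (inc_mult (b u y) v)
        + (inc_mult y (inc_mult (b x v) u) + inc_mult (b x y) (inc_mult v u))"
    using assms by (subst b_mult_left) (simp_all only: expand)
  have second: "b (inc_mult x u) (inc_mult y v)
      = inc_mult y (inc_mult x (b u v)) + inc_mult y (inc_mult (b x v) u)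
        + (inc_mult x (inc_mult (b u y) v) + inc_mult (b x y) (inc_mult u v))"
    using assms by (subst b_mult_right) (simp_all only: expand)
  from first second show ?thesis
    unfolding inc_comm_eq_diff inc_mult_diff_right inc_mult_diff_left inc_mult_assoc[OF locally_finite]
    by (simp add: algebra_simps)
qed

lemma b_mult_mult_inc_comm:
  assumes "x \<in> incidence" "y \<in> incidence" "z \<in> incidence" "u \<in> incidence" "v \<in> incidence"
  shows "inc_mult (b x y) (inc_mult z (inc_comm u v)) = inc_mult (inc_comm x y) (inc_mult z (b u v))"
proof -
  have leibniz: "inc_comm u (inc_mult z v) = inc_mult (inc_comm u z) v + inc_mult z (inc_comm u v)"
    unfolding inc_comm_eq_diff inc_mult_diff_right inc_mult_diff_left inc_mult_assoc[OF locally_finite]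
    by (simp add: algebra_simps)
  have "inc_mult (b x y) (inc_comm u (inc_mult z v)) = inc_mult (inc_comm x y) (b u (inc_mult z v))"
    using assms by (simp add: b_mult_inc_comm)
  moreover have "inc_mult (b x y) (inc_mult (inc_comm u z) v) = inc_mult (inc_comm x y) (inc_mult (b u z) v)"
    using assms by (simp add: b_mult_inc_comm inc_mult_assoc[OF locally_finite, symmetric])
  ultimately show ?thesis
    using assms by (simp add: leibniz b_mult_right inc_mult_add_right algebra_simps)
qed

definition mu :: "'a \<Rightarrow> 'a \<Rightarrow> 'r" where
  "mu x y = b (inc_unit x x) (inc_unit x y) x y"

lemma b_apply_below:
  assumes "s \<le> x" "x < y" "\<alpha> \<in> incidence" "\<beta> \<in> incidence"
  shows "b \<alpha> \<beta> s x = inc_comm \<alpha> \<beta> s x * mu x y"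
proof -
  have "inc_mult (b \<alpha> \<beta>) (inc_mult (inc_unit x x) (inc_comm (inc_unit x x) (inc_unit x y))) s y
     = inc_mult (inc_comm \<alpha> \<beta>) (inc_mult (inc_unit x x) (b (inc_unit x x) (inc_unit x y))) s y"
    using assms by (simp add: b_mult_mult_inc_comm)
  then show ?thesis
    using assms locally_finite
    by (simp add: inc_comm_units inc_mult_unit_left inc_mult_row_right mu_def less_imp_le)
      (simp add: inc_unit_def)
qed

lemma b_apply_above:
  assumes "s < x" "x \<le> t" "\<alpha> \<in> incidence" "\<beta> \<in> incidence"
  shows "b \<alpha> \<beta> x t = mu s x * inc_comm \<alpha> \<beta> x t"
proof -
  have "inc_mult (b (inc_unit s s) (inc_unit s x)) (inc_mult (inc_unit x x) (inc_comm \<alpha> \<beta>)) s t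
     = inc_mult (inc_comm (inc_unit s s) (inc_unit s x)) (inc_mult (inc_unit x x) (b \<alpha> \<beta>)) s t"
    using assms by (simp add: b_mult_mult_inc_comm)
  then show ?thesis
    using assms locally_finite
    by (simp add: inc_comm_units inc_mult_unit_left inc_mult_row_right mu_def less_imp_le)
qed

lemma mu_consecutive:
  assumes "x < y" "y < z"
  shows "mu x y = mu y z"
proof -
  have "b (inc_unit x x) (inc_unit x y) x y = inc_comm (inc_unit x x) (inc_unit x y) x y * mu y z"
    using assms by (intro b_apply_below) auto
  then show ?thesis
    using assms locally_finite by (simp add: mu_def inc_comm_units) (simp add: inc_unit_def)
qed

end

locale incidence_biderivation_infinite_chains = incidence_biderivation b
  for b :: "('a::order \<Rightarrow> 'a \<Rightarrow> 'r::comm_ring_1) \<Rightarrow> ('a \<Rightarrow> 'a \<Rightarrow> 'r) \<Rightarrow> ('a \<Rightarrow> 'a \<Rightarrow> 'r)" +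
  assumes infinite_maximal_chains: "\<forall>l::'a set. maximal_chain l \<longrightarrow> infinite l"
begin

lemma interval_extends: "u \<le> v \<Longrightarrow> \<exists>w::'a. w < u \<or> v < w"
  using exists_below_or_above[OF locally_finite infinite_maximal_chains] .

lemma b_apply_less:
  assumes "u < v" "\<alpha> \<in> incidence" "\<beta> \<in> incidence"
  shows "b \<alpha> \<beta> u v = mu u v * inc_comm \<alpha> \<beta> u v"
proof -
  obtain w where "w < u \<or> v < w"
    using interval_extends[OF less_imp_le[OF assms(1)]] by blast
  then show ?thesis
  proof
    assume "w < u"
    then show ?thesis
      using assms b_apply_above[of w u v] mu_consecutive[of w u v] by auto
  next
    assume "v < w"
    then show ?thesis
      using assms b_apply_below[of u v w] mu_consecutive[of u v w] by (auto simp: mult.commute)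
  qed
qed

lemma b_apply_not_less:
  assumes "\<not> u < v" "\<alpha> \<in> incidence" "\<beta> \<in> incidence"
  shows "b \<alpha> \<beta> u v = 0"
proof (cases "u = v")
  case True
  obtain w where "w < u \<or> u < w"
    using interval_extends by blast
  then show ?thesis
  proof
    assume "w < u"
    then show ?thesis
      using assms b_apply_above[of w u u] True by auto
  next
    assume "u < w"
    then show ?thesis
      using assms b_apply_below[of u u w] True by auto
  qed
next
  case False
  with assms show ?thesis
    using b_incidence[of \<alpha> \<beta>] by (auto simp: incidence_def)
qed

lemma mu_triangle:
  assumes "x < y" "y < z"
  shows "mu x z = mu x y" and "mu y z = mu x y"
proof -
  obtain w where "w < x \<or> z < w"
    using interval_extends[of x z] assms by fastforce
  then have "mu x z = mu x y \<and> mu y z = mu x y"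
  proof
    assume "w < x"
    then show ?thesis
      using assms mu_consecutive[of w x z] mu_consecutive[of w x y] mu_consecutive[of x y z] by auto
  next
    assume "z < w"
    then show ?thesis
      using assms mu_consecutive[of x z w] mu_consecutive[of y z w] mu_consecutive[of x y z] by auto
  qed
  then show "mu x z = mu x y" and "mu y z = mu x y"
    by auto
qed

lemma mu_eq_same_left:
  assumes "p < q" "p < q'" "q \<le> q' \<or> q' \<le> q"
  shows "mu p q = mu p q'"
  using assms mu_triangle[of p q q'] mu_triangle[of p q' q]
  by (cases "q = q'") (auto simp: order.order_iff_strict)

lemma mu_eq_same_right:
  assumes "p < q" "p' < q" "p \<le> p' \<or> p' \<le> p"
  shows "mu p q = mu p' q"
  using assms mu_triangle[of p p' q] mu_triangle[of p' p q]
  by (cases "p = p'") (auto simp: order.order_iff_strict)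

lemma mu_eq_on_chain:
  assumes l: "is_chain l" and "{a, b', c, d} \<subseteq> l" "a < b'" "c < d"
  shows "mu a b' = mu c d"
proof -
  have comparable: "p \<le> q \<or> q \<le> p" if "p \<in> l" "q \<in> l" for p q
    using l that by (auto simp: is_chain_def)
  have "a < d \<or> c < b'"
  proof (cases "a < d")
    case False
    with comparable[of a d] assms(2) have "d \<le> a"
      by auto
    with assms(3,4) show ?thesis
      by (meson order.strict_trans order.strict_trans2)
  qed simp
  then show ?thesis
  proof
    assume "a < d"
    then show ?thesis
      using mu_eq_same_left[of a b' d] mu_eq_same_right[of a d c] comparable assms by auto
  next
    assume "c < b'"
    then show ?thesis
      using mu_eq_same_left[of c d b'] mu_eq_same_right[of a b' c] comparable assms by auto
  qed
qed

lemma mu_eq_if_chain_approx: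
  assumes "chain_approx l1 l2" "{a, b'} \<subseteq> l1" "a < b'" "{c, d} \<subseteq> l2" "c < d"
  shows "mu a b' = mu c d"
proof -
  obtain x y where "x < y" "{x, y} \<subseteq> l1" "{x, y} \<subseteq> l2" "is_chain l1" "is_chain l2"
    using assms(1) unfolding chain_approx_def maximal_chain_def by blast
  with assms show ?thesis
    using mu_eq_on_chain[of l1 a b' x y] mu_eq_on_chain[of l2 c d x y] by auto
qed

lemma mu_eq_if_connected:
  assumes "chain_approx\<^sup>+\<^sup>+ l1 l2" "{a, b'} \<subseteq> l1" "a < b'" "{c, d} \<subseteq> l2" "c < d"
  shows "mu a b' = mu c d"
  using assms(1,4,5)
proof (induction arbitrary: c d rule: tranclp_induct)
  case (base l2)
  then show ?case
    using mu_eq_if_chain_approx[of l1 l2 a b' c d] assms(2,3) by blast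
next
  case (step m l2)
  then obtain x y where "x < y" "{x, y} \<subseteq> m"
    unfolding chain_approx_def by blast
  with step show ?case
    using mu_eq_if_chain_approx[of m l2 x y c d] by auto
qed

definition class_scalar :: "'a set set \<Rightarrow> 'r" where
  "class_scalar C = (let p = SOME p. fst p < snd p \<and> (\<exists>l\<in>C. {fst p, snd p} \<subseteq> l) in mu (fst p) (snd p))"

lemma class_scalar_eq:
  assumes "C \<in> chain_classes" "l \<in> C" "{x, y} \<subseteq> l" "x < y"
  shows "class_scalar C = mu x y"
proof -
  let ?P = "\<lambda>p. fst p < snd p \<and> (\<exists>l\<in>C. {fst p, snd p} \<subseteq> l)"
  have "?P (x, y)"
    using assms by auto
  then have "?P (SOME p. ?P p)"
    by (rule someI)
  then obtain l' where "l' \<in> C" "{fst (SOME p. ?P p), snd (SOME p. ?P p)} \<subseteq> l'"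
    "fst (SOME p. ?P p) < snd (SOME p. ?P p)"
    by blast
  moreover have "chain_approx\<^sup>+\<^sup>+ l l'"
    using chain_classes_connected assms \<open>l' \<in> C\<close> by blast
  ultimately show ?thesis
    using mu_eq_if_connected[of l l' x y] assms unfolding class_scalar_def Let_def by auto
qed

lemma b_apply_eq_class_term:
  assumes "x < y" "\<alpha> \<in> incidence" "\<beta> \<in> incidence"
  defines "t \<equiv> \<lambda>C. class_scalar C * inc_comm (restrict_inc (class_support C) \<alpha>)
                                    (restrict_inc (class_support C) \<beta>) x y"
  shows "\<exists>C0\<in>chain_classes. {C \<in> chain_classes. t C \<noteq> 0} \<subseteq> {C0} \<and> b \<alpha> \<beta> x y = t C0"
proof -
  have "is_chain {x, y}"
    using assms(1) by (auto simp: is_chain_def)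
  then obtain L where L: "maximal_chain L" "{x, y} \<subseteq> L"
    using maximal_chain_extending by blast
  let ?C0 = "chain_class L"
  have "L \<in> ?C0"
    using L assms(1) chain_approx_pair[of L L x y]
    unfolding chain_class_def chain_connected_iff_tranclp by auto
  then have "class_scalar ?C0 = mu x y"
    using class_scalar_eq chain_class_in_chain_classes L assms(1) by blast
  then have "b \<alpha> \<beta> x y = t ?C0"
    using interval_subset_class_support[OF L assms(1)] b_apply_less assms
    unfolding t_def by (simp add: inc_comm_restrict_interval)
  moreover have "C = ?C0" if "C \<in> chain_classes" "t C \<noteq> 0" for C
    using that chain_class_unique[OF interval_extends _ _ _ L assms(1)] inc_comm_restrict_outside
    unfolding t_def by (metis mult_zero_right)
  ultimately show ?thesis
    using chain_class_in_chain_classes[OF L(1)] by blast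
qed

end

theorem mainTheorem18:
  fixes b :: "('a::order \<Rightarrow> 'a \<Rightarrow> 'r::comm_ring_1) \<Rightarrow> ('a \<Rightarrow> 'a \<Rightarrow> 'r) \<Rightarrow> ('a \<Rightarrow> 'a \<Rightarrow> 'r)"
  assumes "locally_finite TYPE('a)"
    and "\<exists>u v w::'a. u \<noteq> v \<and> v \<noteq> w \<and> u \<noteq> w"
    and "\<forall>l::'a set. maximal_chain l \<longrightarrow> infinite l"
    and "additive_biderivation b"
  shows "\<exists>lam::'a set set \<Rightarrow> 'r. \<forall>\<alpha>\<in>incidence. \<forall>\<beta>\<in>incidence. \<forall>x y.
     (let t = (\<lambda>C. lam C * inc_comm (restrict_inc (class_support C) \<alpha>)
                                  (restrict_inc (class_support C) \<beta>) x y)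
      in finite {C\<in>chain_classes. t C \<noteq> 0} \<and>
         b \<alpha> \<beta> x y = (\<Sum>C\<in>{C\<in>chain_classes. t C \<noteq> 0}. t C))"
    (is "\<exists>lam. \<forall>\<alpha>\<in>incidence. \<forall>\<beta>\<in>incidence. \<forall>x y. let t = ?term lam \<alpha> \<beta> x y in _")
proof -
  interpret incidence_biderivation_infinite_chains b
    using assms(1,3,4) by unfold_locales
  have "let t = ?term class_scalar \<alpha> \<beta> x y
      in finite {C\<in>chain_classes. t C \<noteq> 0} \<and> b \<alpha> \<beta> x y = (\<Sum>C\<in>{C\<in>chain_classes. t C \<noteq> 0}. t C)"
    if incidence: "\<alpha> \<in> incidence" "\<beta> \<in> incidence" for \<alpha> \<beta> x y
  proof (cases "x < y")
    case True
    then obtain C0 where "C0 \<in> chain_classes"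
      and support: "{C \<in> chain_classes. ?term class_scalar \<alpha> \<beta> x y C \<noteq> 0} \<subseteq> {C0}"
      and "b \<alpha> \<beta> x y = ?term class_scalar \<alpha> \<beta> x y C0"
      using b_apply_eq_class_term[OF True incidence] by blast
    then show ?thesis
      using sum_nonzero_subset_singleton[OF support] unfolding Let_def by simp
  next
    case False
    then show ?thesis
      using b_apply_not_less[OF False incidence] by (simp add: inc_comm_not_less)
  qed
  then show ?thesis
    by blast
qed

end
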